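(* Consider, for a fixed time slot $t$ and a fixed degradation action, the convex bandwidth allocation problem $$\min_{\{b_{t,n}\},\{\tau^{\rm o}_{t,n}\}} \sum_{n=1}^N w_n \tau^{\rm o}_{t,n}\quad \text{s.t.}\quad \frac{d_{t,n}}{\tau^{\rm o}_{t,n}} \le b_{t,n} W \log_2\!\left(1+\frac{p_n h_{t,n}}{b_{t,n} W \delta^2}\right)\ \forall n,\quad \sum_{n=1}^N b_{t,n}\le 1,\quad b_{t,n}\ge 0,\ \tau^{\rm o}_{t,n}\ge 0\ \forall n.$$ Let $\phi_n\ge 0$ be the Lagrange multipliers of the per-device rate constraints and $\eta\ge 0$ the multiplier of the total bandwidth constraint, and let $\{\eta^\ast,\phi_n^\ast\}$ be the optimal dual variables (maximizers of the Lagrange dual function). Then the optimal solution $\{b_{t,n}^\ast, \tau^{\rm o\ast}_{t,n}\}$ of this problem has the closed-form structure $$\tau^{\rm o\ast}_{t,n} = \sqrt{\frac{\phi_n^\ast d_{t,n}}{w_n}},\qquad b_{t,n}^\ast = \frac{-p_n h_{t,n}}{W\delta^2\left[1+\left(\mathcal{W}\!\left(-\frac{1}{\exp\left(\frac{\eta^\ast \ln 2}{\phi_n^\ast W}+1\right)}\right)\right)^{-1}\right]},$$ where $\mathcal{W}(\cdot)$ is the Lambert-$\mathcal{W}$ function and $\exp(\cdot)$ is the exponential function.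
   Context: Edge inference system with $N$ edge devices offloading images to an edge server over FDMA with total bandwidth $W$; $b_{t,n}\ge 0$ is the fraction of bandwidth allocated to device $n$ in slot $t$, $p_n$ its fixed transmit power, $h_{t,n}$ its channel gain, $\delta^2$ the noise power spectral density, $d_{t,n}$ the offloaded data size in bits (determined by the fixed degradation action), $\tau^{\rm o}_{t,n}$ the offloading time, and $w_n\ge 0$ the latency weighting factor. *)

theory Defs
  imports "HOL-Analysis.Analysis"
begin

text \<open>Principal branch of the Lambert W function: for x \<ge> -1/e, the unique
  w \<ge> -1 with w * exp w = x.\<close>
definition lambertW :: "real \<Rightarrow> real" where
  "lambertW x = (THE w. w \<ge> -1 \<and> w * exp w = x)"

definition rate :: "real \<Rightarrow> real \<Rightarrow> real \<Rightarrow> real \<Rightarrow> real \<Rightarrow> real" where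
  "rate W p h delta2 b = b * W * log 2 (1 + p * h / (b * W * delta2))"

text \<open>Feasible set of the bandwidth allocation problem (devices indexed by n < N).
  The offloading time must be positive, since d/tau appears in the constraint.\<close>
definition feasible ::
  "nat \<Rightarrow> real \<Rightarrow> (nat \<Rightarrow> real) \<Rightarrow> (nat \<Rightarrow> real) \<Rightarrow> real \<Rightarrow> (nat \<Rightarrow> real)
   \<Rightarrow> (nat \<Rightarrow> real) \<Rightarrow> (nat \<Rightarrow> real) \<Rightarrow> bool" where
  "feasible N W p h delta2 d b tau \<longleftrightarrow>
     (\<forall>n<N. d n / tau n \<le> rate W (p n) (h n) delta2 (b n)) \<and>
     (\<Sum>n<N. b n) \<le> 1 \<and>
     (\<forall>n<N. b n \<ge> 0 \<and> tau n > 0)"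

definition objective :: "nat \<Rightarrow> (nat \<Rightarrow> real) \<Rightarrow> (nat \<Rightarrow> real) \<Rightarrow> real" where
  "objective N w tau = (\<Sum>n<N. w n * tau n)"

definition lagrangian ::
  "nat \<Rightarrow> real \<Rightarrow> (nat \<Rightarrow> real) \<Rightarrow> (nat \<Rightarrow> real) \<Rightarrow> real \<Rightarrow> (nat \<Rightarrow> real)
   \<Rightarrow> (nat \<Rightarrow> real) \<Rightarrow> (nat \<Rightarrow> real) \<Rightarrow> (nat \<Rightarrow> real) \<Rightarrow> real \<Rightarrow> (nat \<Rightarrow> real) \<Rightarrow> real" where
  "lagrangian N W p h delta2 d w b tau eta phi =
     (\<Sum>n<N. w n * tau n)
     + (\<Sum>n<N. phi n * (d n / tau n - rate W (p n) (h n) delta2 (b n)))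
     + eta * ((\<Sum>n<N. b n) - 1)"

text \<open>Lagrange dual function (extended-real valued, may be -\<infinity>), infimum over the
  domain b \<ge> 0, tau > 0.\<close>
definition dual_fun ::
  "nat \<Rightarrow> real \<Rightarrow> (nat \<Rightarrow> real) \<Rightarrow> (nat \<Rightarrow> real) \<Rightarrow> real \<Rightarrow> (nat \<Rightarrow> real)
   \<Rightarrow> (nat \<Rightarrow> real) \<Rightarrow> real \<Rightarrow> (nat \<Rightarrow> real) \<Rightarrow> ereal" where
  "dual_fun N W p h delta2 d w eta phi =
     (INF bt \<in> {(b, tau). \<forall>n<N. b n \<ge> 0 \<and> tau n > 0}.
        ereal (lagrangian N W p h delta2 d w (fst bt) (snd bt) eta phi))"

end

theory Submission
  imports Defs
begin

(* At the primal optimum (b, tau) every bandwidth is positive, every rate constraint is tight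
   (tau k = d k / rate k (b k)) and the budget is exhausted. Exchanging bandwidth between two
   devices shows that the marginal costs phi k * rate' k (b k), with phi k = w k * tau k^2 / d k,
   all agree; call the common value eta. Concavity of the rate in b and AM-GM in tau then give
   that the Lagrangian at (eta, phi) is bounded below by the optimal value, so by dual optimality
   (b, tau) also minimizes the Lagrangian at the optimal multipliers. The first-order conditions
   of that minimization give tau n, and writing the condition for b n as
   (-v) exp (-v) = - exp (-(a + 1)), with v = b n / (b n + snr n) and
   a = eta ln 2 / (phi n W), gives the Lambert W form. *)

lemma ln_less_minus_one: "0 < x \<Longrightarrow> x \<noteq> 1 \<Longrightarrow> ln x < x - 1"
  for x :: real
  using ln_le_minus_one ln_eq_minus_one by fastforce

definition capacity :: "real \<Rightarrow> real \<Rightarrow> real" where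
  "capacity c b = b * ln (1 + c / b)"

definition capacity' :: "real \<Rightarrow> real \<Rightarrow> real" where
  "capacity' c b = ln (1 + c / b) - c / (b + c)"

lemma rate_eq_capacity: "rate W p h delta2 b = W / ln 2 * capacity (p * h / (W * delta2)) b"
  unfolding rate_def capacity_def log_def by (simp add: field_simps)

lemma capacity_has_derivative:
  assumes "0 < c" "0 < b"
  shows "(capacity c has_real_derivative capacity' c b) (at b)"
proof -
  have "(1 + c / b) * b = b + c" "b\<^sup>2 * (1 + c / b) = b * (b + c)"
    using assms by (simp_all add: field_simps power2_eq_square)
  then show ?thesis
    unfolding capacity_def[abs_def] capacity'_def using assms
    by (auto intro!: derivative_eq_intros simp: add_pos_pos)
qed

lemma capacity_tangent:
  assumes "0 < c" "0 < b\<^sub>0" "0 \<le> b"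
  shows "capacity c b \<le> capacity c b\<^sub>0 + capacity' c b\<^sub>0 * (b - b\<^sub>0)"
proof (cases "b = 0")
  case True
  then show ?thesis using assms by (simp add: capacity_def capacity'_def field_simps)
next
  case False
  with assms have "0 < b" by simp
  have "ln (1 + c / b) - ln (1 + c / b\<^sub>0) \<le> ((1 + c / b) - (1 + c / b\<^sub>0)) / (1 + c / b\<^sub>0)"
    using assms \<open>0 < b\<close> by (intro ln_diff_le) (auto intro: add_pos_pos)
  also have "\<dots> = c * (b\<^sub>0 - b) / (b * (b\<^sub>0 + c))"
    using assms \<open>0 < b\<close> by (simp add: divide_simps) (simp add: algebra_simps)
  finally have "b * (ln (1 + c / b) - ln (1 + c / b\<^sub>0)) \<le> b * (c * (b\<^sub>0 - b) / (b * (b\<^sub>0 + c)))"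
    using \<open>0 < b\<close> by (intro mult_left_mono) auto
  also have "\<dots> = c * (b\<^sub>0 - b) / (b\<^sub>0 + c)"
    using \<open>0 < b\<close> by simp
  also have "\<dots> = capacity c b\<^sub>0 + capacity' c b\<^sub>0 * (b - b\<^sub>0) - b * ln (1 + c / b\<^sub>0)"
    using assms by (simp add: capacity_def capacity'_def field_simps)
  finally show ?thesis by (simp add: capacity_def algebra_simps)
qed

lemma capacity'_pos:
  assumes "0 < c" "0 < b"
  shows "0 < capacity' c b"
proof -
  have "ln (b / (b + c)) < b / (b + c) - 1"
    using assms by (intro ln_less_minus_one) auto
  moreover have "ln (b / (b + c)) = - ln (1 + c / b)"
    using assms by (simp add: ln_div field_simps)
  moreover have "b / (b + c) - 1 = - (c / (b + c))"
    using assms by (simp add: field_simps)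
  ultimately show ?thesis by (simp add: capacity'_def)
qed

lemma capacity_pos: "0 < c \<Longrightarrow> 0 < b \<Longrightarrow> 0 < capacity c b"
  unfolding capacity_def by (simp add: add_pos_pos)

lemma capacity_strict_mono:
  assumes "0 < c" "0 < b\<^sub>0" "b\<^sub>0 < b"
  shows "capacity c b\<^sub>0 < capacity c b"
proof -
  have "capacity c b\<^sub>0 \<le> capacity c b + capacity' c b * (b\<^sub>0 - b)"
    using assms by (intro capacity_tangent) auto
  moreover have "capacity' c b * (b\<^sub>0 - b) < 0"
    using assms capacity'_pos[of c b] by (simp add: mult_pos_neg)
  ultimately show ?thesis by simp
qed

lemma mult_exp_strict_mono:
  fixes a b :: real
  assumes "-1 \<le> a" "a < b"
  shows "a * exp a < b * exp b"
proof (rule DERIV_pos_imp_increasing_open[OF assms(2)])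
  fix x assume "a < x"
  then have "0 < (1 + x) * exp x"
    using assms by simp
  moreover have "((\<lambda>w. w * exp w) has_real_derivative (1 + x) * exp x) (at x)"
    by (auto intro!: derivative_eq_intros simp: algebra_simps)
  ultimately show "\<exists>y. ((\<lambda>w. w * exp w) has_real_derivative y) (at x) \<and> 0 < y"
    by blast
qed (intro continuous_intros)

lemma lambertW_mult_exp:
  assumes "-1 \<le> w"
  shows "lambertW (w * exp w) = w"
  unfolding lambertW_def
proof (rule the_equality)
  fix v assume v: "-1 \<le> v \<and> v * exp v = w * exp w"
  show "v = w"
    using mult_exp_strict_mono[of v w] mult_exp_strict_mono[of w v] v assms
    by (cases v w rule: linorder_cases) auto
qed (use assms in simp)

lemma lambertW_capacity':
  assumes "0 < c" "0 < b"
  shows "lambertW (- 1 / exp (capacity' c b + 1)) = - (b / (b + c))"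
proof -
  define v where "v = b / (b + c)"
  have v: "0 < v" "v \<le> 1" using assms by (auto simp: v_def)
  have "capacity' c b + 1 = v - ln v"
    using assms by (simp add: capacity'_def v_def ln_div field_simps)
  then have "exp (capacity' c b + 1) = exp v / v"
    using v by (simp add: exp_diff)
  then have "- 1 / exp (capacity' c b + 1) = (- v) * exp (- v)"
    by (simp add: exp_minus field_simps)
  then have "lambertW (- 1 / exp (capacity' c b + 1)) = - v"
    using v by (simp only: lambertW_mult_exp)
  then show ?thesis by (simp add: v_def)
qed

lemma sum_fun_upd:
  fixes F :: "'a \<Rightarrow> 'b \<Rightarrow> 'c::ab_group_add"
  assumes "finite A" "n \<in> A"
  shows "(\<Sum>k\<in>A. F k ((g(n := x)) k)) = (\<Sum>k\<in>A. F k (g k)) - F n (g n) + F n x"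
proof -
  have "(\<Sum>k\<in>A - {n}. F k ((g(n := x)) k)) = (\<Sum>k\<in>A - {n}. F k (g k))"
    by (rule sum.cong) auto
  then show ?thesis
    using sum.remove[OF assms, of "\<lambda>k. F k ((g(n := x)) k)"] sum.remove[OF assms, of "\<lambda>k. F k (g k)"]
    by simp
qed

lemma exchange_stationarity:
  fixes F :: "'a \<Rightarrow> real \<Rightarrow> real" and x :: "'a \<Rightarrow> real"
  assumes A: "finite A" "i \<in> A" "j \<in> A" "i \<noteq> j"
    and pos: "\<And>k. k \<in> A \<Longrightarrow> 0 < x k"
    and min: "\<And>y. (\<And>k. k \<in> A \<Longrightarrow> 0 < y k) \<Longrightarrow> sum y A = sum x A \<Longrightarrow>
                (\<Sum>k\<in>A. F k (x k)) \<le> (\<Sum>k\<in>A. F k (y k))"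
    and Fi: "(F i has_real_derivative Di) (at (x i))"
    and Fj: "(F j has_real_derivative Dj) (at (x j))"
  shows "Di = Dj"
proof -
  define G where "G e = F i (x i + e) + F j (x j - e)" for e
  have "((\<lambda>e. F i (x i + e)) has_real_derivative Di * 1) (at 0)"
    by (rule DERIV_chain2[of "F i"]) (use Fi in \<open>auto intro!: derivative_eq_intros\<close>)
  moreover have "((\<lambda>e. F j (x j - e)) has_real_derivative Dj * -1) (at 0)"
    by (rule DERIV_chain2[of "F j"]) (use Fj in \<open>auto intro!: derivative_eq_intros\<close>)
  ultimately have G': "(G has_real_derivative Di - Dj) (at 0)"
    unfolding G_def[abs_def] using DERIV_add by fastforce
  have local_min: "G 0 \<le> G e" if e: "\<bar>0 - e\<bar> < min (x i) (x j)" for e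
  proof -
    define y where "y = (x(i := x i + e))(j := x j - e)"
    have "\<And>k. k \<in> A \<Longrightarrow> 0 < y k"
      using pos e by (auto simp: y_def)
    moreover have "sum y A = sum x A"
    proof -
      have "sum y A = sum (x(i := x i + e)) A - x j + (x j - e)"
        using sum_fun_upd[OF A(1,3), of "\<lambda>k v. v" "x(i := x i + e)" "x j - e"]
        unfolding y_def fun_upd_other[OF not_sym[OF A(4)]] .
      also have "\<dots> = sum x A"
        using sum_fun_upd[OF A(1,2), of "\<lambda>k v. v" x "x i + e"] by linarith
      finally show ?thesis .
    qed
    ultimately have "(\<Sum>k\<in>A. F k (x k)) \<le> (\<Sum>k\<in>A. F k (y k))"
      by (rule min)
    also have "\<dots> = (\<Sum>k\<in>A. F k (x k)) - G 0 + G e"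
      using sum_fun_upd[OF A(1,3), of F] sum_fun_upd[OF A(1,2), of F] A(4)
      by (simp add: y_def G_def)
    finally show ?thesis by simp
  qed
  moreover have "0 < min (x i) (x j)"
    using pos A(2,3) by simp
  ultimately have "Di - Dj = 0"
    using DERIV_local_min[OF G'] by blast
  then show ?thesis by simp
qed

lemma linear_plus_reciprocal_ge:
  fixes c s t :: real
  assumes "0 \<le> c" "0 < s"
  shows "2 * c * t \<le> c * s + c * t\<^sup>2 / s"
proof -
  have "c * s + c * t\<^sup>2 / s - 2 * c * t = c * (s - t)\<^sup>2 / s"
    using assms by (simp add: field_simps power2_eq_square)
  moreover have "0 \<le> c * (s - t)\<^sup>2 / s"
    using assms by simp
  ultimately show ?thesis by simp
qed

lemma linear_plus_reciprocal_argmin: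
  fixes a c t :: real
  assumes "0 < c" "0 \<le> a" "0 < t"
    and min: "\<And>s. 0 < s \<Longrightarrow> c * t + a / t \<le> c * s + a / s"
  shows "t = sqrt (a / c)"
proof (cases "a = 0")
  case True
  then show ?thesis
    using min[of "t / 2"] assms by simp
next
  case False
  define s where "s = sqrt (a / c)"
  have "0 < s" "a = c * s\<^sup>2"
    using False assms by (simp_all add: s_def)
  have "c * (t - s)\<^sup>2 / t = (c * t + a / t) - (c * s + a / s)"
    using \<open>0 < s\<close> \<open>a = c * s\<^sup>2\<close> assms by (simp add: field_simps power2_eq_square)
  also have "\<dots> \<le> 0"
    using min[OF \<open>0 < s\<close>] by simp
  finally have "(t - s)\<^sup>2 \<le> 0"
    using assms by (simp add: divide_le_0_iff mult_le_0_iff)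
  then show ?thesis by (simp add: s_def)
qed

lemma lagrangian_separable:
  "lagrangian N W p h delta2 d w b \<tau> \<eta> \<phi> =
     (\<Sum>k<N. w k * \<tau> k + \<phi> k * (d k / \<tau> k - rate W (p k) (h k) delta2 (b k)) + \<eta> * b k) - \<eta>"
  unfolding lagrangian_def
  by (simp only: sum.distrib sum_distrib_left) (simp add: algebra_simps sum_distrib_left)

locale bandwidth_allocation =
  fixes N :: nat and W :: real and p h :: "nat \<Rightarrow> real" and delta2 :: real
    and d w :: "nat \<Rightarrow> real"
  assumes W_pos: "0 < W" and delta2_pos: "0 < delta2"
    and params_pos: "\<And>k. k < N \<Longrightarrow> 0 < p k \<and> 0 < h k \<and> 0 < d k \<and> 0 < w k"
begin

abbreviation R :: "nat \<Rightarrow> real \<Rightarrow> real" where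
  "R k \<equiv> rate W (p k) (h k) delta2"

abbreviation L :: "(nat \<Rightarrow> real) \<Rightarrow> (nat \<Rightarrow> real) \<Rightarrow> real \<Rightarrow> (nat \<Rightarrow> real) \<Rightarrow> real" where
  "L \<equiv> lagrangian N W p h delta2 d w"

abbreviation lagrangian_domain :: "((nat \<Rightarrow> real) \<times> (nat \<Rightarrow> real)) set" where
  "lagrangian_domain \<equiv> {(b, tau). \<forall>n<N. b n \<ge> 0 \<and> tau n > 0}"

definition snr :: "nat \<Rightarrow> real" where
  "snr k = p k * h k / (W * delta2)"

definition marginal_rate :: "nat \<Rightarrow> real \<Rightarrow> real" where
  "marginal_rate k x = W / ln 2 * capacity' (snr k) x"

definition lagrangian_minimizer ::
  "real \<Rightarrow> (nat \<Rightarrow> real) \<Rightarrow> (nat \<Rightarrow> real) \<Rightarrow> (nat \<Rightarrow> real) \<Rightarrow> bool" where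
  "lagrangian_minimizer \<eta> \<phi> b \<tau> \<longleftrightarrow>
     (b, \<tau>) \<in> lagrangian_domain \<and> (\<forall>(b', \<tau>') \<in> lagrangian_domain. L b \<tau> \<eta> \<phi> \<le> L b' \<tau>' \<eta> \<phi>)"

lemma snr_pos: "k < N \<Longrightarrow> 0 < snr k"
  using params_pos W_pos delta2_pos by (simp add: snr_def)

lemma rate_eq: "R k x = W / ln 2 * capacity (snr k) x"
  unfolding rate_eq_capacity snr_def ..

lemma rate_pos: "k < N \<Longrightarrow> 0 < x \<Longrightarrow> 0 < R k x"
  using capacity_pos[OF snr_pos] W_pos by (simp add: rate_eq)

lemma rate_strict_mono: "k < N \<Longrightarrow> 0 < x \<Longrightarrow> x < y \<Longrightarrow> R k x < R k y"
  using capacity_strict_mono[OF snr_pos] W_pos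
  by (simp add: rate_eq divide_strict_right_mono mult_strict_left_mono)

lemma rate_tangent:
  assumes "k < N" "0 < x" "0 \<le> y"
  shows "R k y \<le> R k x + marginal_rate k x * (y - x)"
proof -
  have "W / ln 2 * capacity (snr k) y
      \<le> W / ln 2 * (capacity (snr k) x + capacity' (snr k) x * (y - x))"
    using capacity_tangent[OF snr_pos[OF assms(1)] assms(2,3)] W_pos by (intro mult_left_mono) auto
  then show ?thesis
    by (simp only: rate_eq marginal_rate_def ring_distribs mult.assoc)
qed

lemma rate_has_derivative:
  assumes "k < N" "0 < x"
  shows "(R k has_real_derivative marginal_rate k x) (at x)"
  unfolding rate_eq[abs_def] marginal_rate_def
  using capacity_has_derivative[OF snr_pos[OF assms(1)] assms(2)] by (rule DERIV_cmult)

lemma marginal_rate_pos: "k < N \<Longrightarrow> 0 < x \<Longrightarrow> 0 < marginal_rate k x"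
  using capacity'_pos[OF snr_pos] W_pos by (simp add: marginal_rate_def)

lemma lagrangian_update_offload_time:
  assumes "n < N"
  shows "L b (\<tau>(n := s)) \<eta> \<phi> = L b \<tau> \<eta> \<phi> - (w n * \<tau> n + \<phi> n * d n / \<tau> n) + (w n * s + \<phi> n * d n / s)"
  using sum_fun_upd[of "{..<N}" n "\<lambda>k t. w k * t + \<phi> k * (d k / t - R k (b k)) + \<eta> * b k" \<tau> s] assms
  by (simp add: lagrangian_separable algebra_simps)

lemma lagrangian_update_bandwidth:
  assumes "n < N"
  shows "L (b(n := x)) \<tau> \<eta> \<phi> = L b \<tau> \<eta> \<phi> - (\<eta> * b n - \<phi> n * R n (b n)) + (\<eta> * x - \<phi> n * R n x)"
  using sum_fun_upd[of "{..<N}" n "\<lambda>k y. w k * \<tau> k + \<phi> k * (d k / \<tau> k - R k y) + \<eta> * y" b x] assms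
  by (simp add: lagrangian_separable algebra_simps)

lemma lagrangian_minimizer_offload_time:
  assumes min: "lagrangian_minimizer \<eta> \<phi> b \<tau>" and n: "n < N" and "0 \<le> \<phi> n"
  shows "\<tau> n = sqrt (\<phi> n * d n / w n)"
proof -
  have "w n * \<tau> n + \<phi> n * d n / \<tau> n \<le> w n * s + \<phi> n * d n / s" if "0 < s" for s
  proof -
    have "(b, \<tau>(n := s)) \<in> lagrangian_domain"
      using min that by (auto simp: lagrangian_minimizer_def)
    then have "L b \<tau> \<eta> \<phi> \<le> L b (\<tau>(n := s)) \<eta> \<phi>"
      using min by (auto simp: lagrangian_minimizer_def)
    then show ?thesis
      unfolding lagrangian_update_offload_time[OF n] by simp
  qed
  moreover have "0 < \<tau> n" "0 < w n" "0 \<le> \<phi> n * d n"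
    using min params_pos[OF n] \<open>0 \<le> \<phi> n\<close> by (auto simp: lagrangian_minimizer_def n)
  ultimately show ?thesis
    by (intro linear_plus_reciprocal_argmin) auto
qed

lemma lagrangian_minimizer_rate_multiplier_pos:
  assumes min: "lagrangian_minimizer \<eta> \<phi> b \<tau>" and n: "n < N" and "0 \<le> \<phi> n"
  shows "0 < \<phi> n"
proof -
  have "0 < sqrt (\<phi> n * d n / w n)"
    using lagrangian_minimizer_offload_time[OF assms] min n by (auto simp: lagrangian_minimizer_def)
  then show ?thesis
    using params_pos[OF n] \<open>0 \<le> \<phi> n\<close> by (auto simp: zero_less_mult_iff zero_less_divide_iff)
qed

lemma lagrangian_minimizer_bandwidth:
  assumes min: "lagrangian_minimizer \<eta> \<phi> b \<tau>" and n: "n < N" and "0 < b n"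
  shows "\<eta> = \<phi> n * marginal_rate n (b n)"
proof -
  define f where "f x = \<eta> * x - \<phi> n * R n x" for x
  have "(f has_real_derivative \<eta> * 1 - \<phi> n * marginal_rate n (b n)) (at (b n))"
    unfolding f_def[abs_def]
    by (intro DERIV_diff DERIV_cmult DERIV_ident rate_has_derivative n \<open>0 < b n\<close>)
  moreover have "f (b n) \<le> f x" if "\<bar>b n - x\<bar> < b n" for x
  proof -
    have "(b(n := x), \<tau>) \<in> lagrangian_domain"
      using min that by (auto simp: lagrangian_minimizer_def)
    then have "L b \<tau> \<eta> \<phi> \<le> L (b(n := x)) \<tau> \<eta> \<phi>"
      using min by (auto simp: lagrangian_minimizer_def)
    then show ?thesis
      unfolding lagrangian_update_bandwidth[OF n] f_def by simp
  qed
  ultimately have "\<eta> * 1 - \<phi> n * marginal_rate n (b n) = 0"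
    using DERIV_local_min \<open>0 < b n\<close> by blast
  then show ?thesis by simp
qed

lemma bandwidth_eq_lambertW:
  assumes n: "n < N" and "0 < x" "0 < \<phi>" and \<eta>: "\<eta> = \<phi> * marginal_rate n x"
  shows "x = - p n * h n /
    (W * delta2 * (1 + inverse (lambertW (- 1 / exp (\<eta> * ln 2 / (\<phi> * W) + 1)))))"
proof -
  have "\<eta> * ln 2 / (\<phi> * W) = capacity' (snr n) x"
    using \<eta> \<open>0 < \<phi>\<close> W_pos by (simp add: marginal_rate_def)
  then have lambertW_eq: "lambertW (- 1 / exp (\<eta> * ln 2 / (\<phi> * W) + 1)) = - (x / (x + snr n))"
    using lambertW_capacity'[OF snr_pos[OF n] \<open>0 < x\<close>] by simp
  have "1 + inverse (- (x / (x + snr n))) = - (snr n / x)"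
    using \<open>0 < x\<close> snr_pos[OF n] by (simp add: field_simps)
  then have "W * delta2 * (1 + inverse (lambertW (- 1 / exp (\<eta> * ln 2 / (\<phi> * W) + 1)))) = - (p n * h n) / x"
    unfolding lambertW_eq using W_pos delta2_pos by (simp add: snr_def)
  then show ?thesis
    using \<open>0 < x\<close> params_pos[OF n] by simp
qed

end

locale optimal_allocation = bandwidth_allocation +
  fixes b \<tau> :: "nat \<Rightarrow> real"
  assumes feasible_opt: "feasible N W p h delta2 d b \<tau>"
    and objective_opt: "\<And>b' \<tau>'. feasible N W p h delta2 d b' \<tau>' \<Longrightarrow> objective N w \<tau> \<le> objective N w \<tau>'"
begin

lemma
  shows rate_constraint: "k < N \<Longrightarrow> d k / \<tau> k \<le> R k (b k)"
    and bandwidth_budget: "(\<Sum>k<N. b k) \<le> 1"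
    and optimum_in_domain: "(b, \<tau>) \<in> lagrangian_domain"
  using feasible_opt by (auto simp: feasible_def)

lemma objective_le_reduced:
  assumes "\<And>k. k < N \<Longrightarrow> 0 < y k" "(\<Sum>k<N. y k) \<le> 1"
  shows "objective N w \<tau> \<le> (\<Sum>k<N. w k * (d k / R k (y k)))"
proof -
  have "feasible N W p h delta2 d y (\<lambda>k. d k / R k (y k))"
    using assms rate_pos params_pos by (auto simp: feasible_def less_imp_le)
  then show ?thesis
    using objective_opt by (fastforce simp: objective_def)
qed

lemma bandwidth_pos:
  assumes k: "k < N"
  shows "0 < b k"
proof (rule ccontr)
  assume "\<not> 0 < b k"
  then have "R k (b k) = 0"
    using optimum_in_domain k by (force simp: rate_def)
  moreover have "0 < d k / \<tau> k"
    using optimum_in_domain params_pos[OF k] k by auto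
  ultimately show False
    using rate_constraint[OF k] by simp
qed

lemma offload_time_eq:
  assumes k: "k < N"
  shows "\<tau> k = d k / R k (b k)"
proof -
  have le: "w i * (d i / R i (b i)) \<le> w i * \<tau> i" if "i \<in> {..<N}" for i
  proof -
    from that have i: "i < N" by simp
    have "0 < R i (b i)" "0 < \<tau> i"
      using rate_pos[OF i bandwidth_pos[OF i]] optimum_in_domain i by auto
    then have "d i / R i (b i) \<le> \<tau> i"
      using rate_constraint[OF i] by (simp add: divide_le_eq pos_divide_le_eq mult.commute)
    then show ?thesis
      using params_pos[OF i] by (intro mult_left_mono) auto
  qed
  have "objective N w \<tau> \<le> (\<Sum>k<N. w k * (d k / R k (b k)))"
    using bandwidth_pos bandwidth_budget by (rule objective_le_reduced)
  moreover have "(\<Sum>k<N. w k * (d k / R k (b k))) \<le> objective N w \<tau>"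
    unfolding objective_def using le by (rule sum_mono)
  ultimately have "(\<Sum>k<N. w k * (d k / R k (b k))) = (\<Sum>k<N. w k * \<tau> k)"
    unfolding objective_def by (rule antisym[rotated])
  then have "w k * (d k / R k (b k)) = w k * \<tau> k"
    by (rule sum_mono_inv[OF _ le]) (use k in auto)
  then show ?thesis
    using params_pos[OF k] mult_left_cancel[of "w k" "d k / R k (b k)" "\<tau> k"] by simp
qed

lemma rate_constraint_tight:
  assumes k: "k < N"
  shows "d k / \<tau> k = R k (b k)"
proof -
  have "0 < d k" "0 < R k (b k)"
    using params_pos[OF k] rate_pos[OF k bandwidth_pos[OF k]] by auto
  then show ?thesis
    by (simp add: offload_time_eq[OF k])
qed

lemma bandwidth_sum_eq:
  assumes "0 < N"
  shows "(\<Sum>k<N. b k) = 1"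
proof (rule ccontr)
  define s where "s = (\<Sum>k<N. b k)"
  assume "(\<Sum>k<N. b k) \<noteq> 1"
  moreover have "0 < s"
    unfolding s_def using assms bandwidth_pos by (intro sum_pos) auto
  ultimately have s: "0 < s" "s < 1"
    using bandwidth_budget by (simp_all add: s_def)
  define y where "y k = b k / s" for k
  have y: "b k < y k" if "k < N" for k
    using s bandwidth_pos[OF that] by (simp add: y_def field_simps)
  have "objective N w \<tau> \<le> (\<Sum>k<N. w k * (d k / R k (y k)))"
  proof (rule objective_le_reduced)
    show "0 < y k" if "k < N" for k
      using y[OF that] bandwidth_pos[OF that] by simp
    show "(\<Sum>k<N. y k) \<le> 1"
      using s by (simp add: y_def s_def flip: sum_divide_distrib)
  qed
  also have "\<dots> < (\<Sum>k<N. w k * (d k / R k (b k)))"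
  proof (rule sum_strict_mono)
    fix k assume "k \<in> {..<N}"
    then have k: "k < N" by simp
    have "R k (b k) < R k (y k)" "0 < R k (b k)"
      using rate_strict_mono[OF k bandwidth_pos[OF k] y[OF k]] rate_pos[OF k bandwidth_pos[OF k]] .
    then show "w k * (d k / R k (y k)) < w k * (d k / R k (b k))"
      using params_pos[OF k] by (simp add: divide_strict_left_mono)
  qed (use assms in auto)
  also have "\<dots> = objective N w \<tau>"
    by (simp add: objective_def offload_time_eq)
  finally show False by simp
qed

definition rate_multiplier :: "nat \<Rightarrow> real" where
  "rate_multiplier k = w k * \<tau> k ^ 2 / d k"

(* Device 0 is an arbitrary choice (budget_multiplier_eq); the value is junk when N = 0. *)
definition budget_multiplier :: real where
  "budget_multiplier = rate_multiplier 0 * marginal_rate 0 (b 0)"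

lemma rate_multiplier_nonneg: "k < N \<Longrightarrow> 0 \<le> rate_multiplier k"
  using params_pos[of k] by (simp add: rate_multiplier_def)

lemma reduced_cost_has_derivative:
  assumes k: "k < N"
  shows "((\<lambda>x. w k * (d k / R k x)) has_real_derivative
           - (rate_multiplier k * marginal_rate k (b k))) (at (b k))"
proof -
  have "0 < R k (b k)"
    using rate_pos[OF k bandwidth_pos[OF k]] .
  then have "((\<lambda>x. w k * (d k / R k x)) has_real_derivative
      w k * ((0 * R k (b k) - d k * marginal_rate k (b k)) / (R k (b k) * R k (b k)))) (at (b k))"
    by (intro DERIV_cmult DERIV_divide DERIV_const rate_has_derivative k bandwidth_pos) simp
  moreover have "w k * ((0 * R k (b k) - d k * marginal_rate k (b k)) / (R k (b k) * R k (b k)))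
      = - (rate_multiplier k * marginal_rate k (b k))"
    using params_pos[OF k] \<open>0 < R k (b k)\<close>
    by (simp add: rate_multiplier_def offload_time_eq[OF k] power2_eq_square)
  ultimately show ?thesis by simp
qed

lemma marginal_costs_equal:
  assumes i: "i < N" and j: "j < N"
  shows "rate_multiplier i * marginal_rate i (b i) = rate_multiplier j * marginal_rate j (b j)"
proof (cases "i = j")
  case False
  have "- (rate_multiplier i * marginal_rate i (b i)) = - (rate_multiplier j * marginal_rate j (b j))"
  proof (rule exchange_stationarity[of "{..<N}" i j b "\<lambda>k x. w k * (d k / R k x)"])
    fix y assume "\<And>k. k \<in> {..<N} \<Longrightarrow> 0 < y k" "sum y {..<N} = sum b {..<N}"
    then have "objective N w \<tau> \<le> (\<Sum>k<N. w k * (d k / R k (y k)))"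
      using bandwidth_budget by (intro objective_le_reduced) auto
    then show "(\<Sum>k<N. w k * (d k / R k (b k))) \<le> (\<Sum>k<N. w k * (d k / R k (y k)))"
      by (simp add: objective_def offload_time_eq)
  qed (use i j False bandwidth_pos reduced_cost_has_derivative in auto)
  then show ?thesis by simp
qed simp

lemma budget_multiplier_eq:
  assumes "k < N"
  shows "rate_multiplier k * marginal_rate k (b k) = budget_multiplier"
  using marginal_costs_equal[OF assms, of 0] assms by (simp add: budget_multiplier_def)

lemma budget_multiplier_nonneg: "0 < N \<Longrightarrow> 0 \<le> budget_multiplier"
  using rate_multiplier_nonneg marginal_rate_pos bandwidth_pos
  by (simp add: budget_multiplier_def less_imp_le)

lemma objective_le_lagrangian:
  assumes "0 < N" "(b', \<tau>') \<in> lagrangian_domain"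
  shows "objective N w \<tau> \<le> L b' \<tau>' budget_multiplier rate_multiplier"
proof -
  let ?\<eta> = budget_multiplier and ?\<phi> = rate_multiplier
  have "w k * \<tau> k + ?\<eta> * b k \<le> w k * \<tau>' k + ?\<phi> k * (d k / \<tau>' k - R k (b' k)) + ?\<eta> * b' k"
    if k: "k < N" for k
  proof -
    have "?\<phi> k * (d k / \<tau>' k) = w k * \<tau> k ^ 2 / \<tau>' k"
      using params_pos[OF k] by (simp add: rate_multiplier_def)
    moreover have "2 * w k * \<tau> k \<le> w k * \<tau>' k + w k * \<tau> k ^ 2 / \<tau>' k"
      using params_pos[OF k] assms k by (intro linear_plus_reciprocal_ge) auto
    moreover have "?\<phi> k * R k (b' k) \<le> ?\<phi> k * (R k (b k) + marginal_rate k (b k) * (b' k - b k))"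
      using rate_tangent[OF k bandwidth_pos[OF k]] rate_multiplier_nonneg[OF k] assms k
      by (intro mult_left_mono) auto
    moreover have "?\<phi> k * (R k (b k) + marginal_rate k (b k) * (b' k - b k)) = w k * \<tau> k + ?\<eta> * (b' k - b k)"
    proof -
      have "?\<phi> k * R k (b k) = w k * \<tau> k"
        using params_pos[OF k] optimum_in_domain k
        by (auto simp: rate_constraint_tight[OF k, symmetric] rate_multiplier_def power2_eq_square)
      then show ?thesis
        by (simp add: budget_multiplier_eq[OF k, symmetric] algebra_simps)
    qed
    ultimately show ?thesis
      by (simp only: right_diff_distrib)
  qed
  then have "(\<Sum>k<N. w k * \<tau> k + ?\<eta> * b k)
      \<le> (\<Sum>k<N. w k * \<tau>' k + ?\<phi> k * (d k / \<tau>' k - R k (b' k)) + ?\<eta> * b' k)"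
    by (intro sum_mono) auto
  moreover have "(\<Sum>k<N. w k * \<tau> k + ?\<eta> * b k) = objective N w \<tau> + ?\<eta>"
    using bandwidth_sum_eq[OF assms(1)] by (simp add: objective_def sum.distrib flip: sum_distrib_left)
  ultimately show ?thesis
    by (simp add: lagrangian_separable)
qed

lemma objective_le_dual_fun:
  assumes "0 < N"
  shows "ereal (objective N w \<tau>) \<le> dual_fun N W p h delta2 d w budget_multiplier rate_multiplier"
  unfolding dual_fun_def
proof (rule INF_greatest)
  fix bt assume "bt \<in> lagrangian_domain"
  then show "ereal (objective N w \<tau>) \<le> ereal (L (fst bt) (snd bt) budget_multiplier rate_multiplier)"
    using objective_le_lagrangian[OF assms, of "fst bt" "snd bt"] by simp
qed

lemma lagrangian_at_optimum:
  assumes "0 < N"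
  shows "L b \<tau> \<eta> \<phi> = objective N w \<tau>"
  using bandwidth_sum_eq[OF assms] by (simp add: lagrangian_def objective_def rate_constraint_tight)

lemma saddle_point:
  assumes "0 < N"
    and dual_opt: "\<forall>\<eta>' \<phi>'. \<eta>' \<ge> 0 \<and> (\<forall>n<N. \<phi>' n \<ge> 0) \<longrightarrow>
        dual_fun N W p h delta2 d w \<eta>' \<phi>' \<le> dual_fun N W p h delta2 d w \<eta> \<phi>"
  shows "lagrangian_minimizer \<eta> \<phi> b \<tau>"
proof -
  have "dual_fun N W p h delta2 d w budget_multiplier rate_multiplier \<le> dual_fun N W p h delta2 d w \<eta> \<phi>"
    using dual_opt budget_multiplier_nonneg[OF assms(1)] rate_multiplier_nonneg by simp
  with objective_le_dual_fun[OF assms(1)]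
  have objective_le: "ereal (objective N w \<tau>) \<le> dual_fun N W p h delta2 d w \<eta> \<phi>"
    by (rule order_trans)
  have "L b \<tau> \<eta> \<phi> \<le> L b' \<tau>' \<eta> \<phi>" if "(b', \<tau>') \<in> lagrangian_domain" for b' \<tau>'
  proof -
    have "dual_fun N W p h delta2 d w \<eta> \<phi> \<le> ereal (L b' \<tau>' \<eta> \<phi>)"
      unfolding dual_fun_def using that by (intro INF_lower2[of "(b', \<tau>')"]) auto
    with objective_le have "ereal (objective N w \<tau>) \<le> ereal (L b' \<tau>' \<eta> \<phi>)"
      by (rule order_trans)
    then show ?thesis
      using lagrangian_at_optimum[OF assms(1)] by simp
  qed
  then show ?thesis
    using optimum_in_domain by (auto simp: lagrangian_minimizer_def)
qed

end

theorem proposition1: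
  fixes N :: nat and W delta2 :: real
    and p h d w :: "nat \<Rightarrow> real"
    and bopt tauopt :: "nat \<Rightarrow> real"
    and etaopt :: real and phiopt :: "nat \<Rightarrow> real"
  assumes W_pos: "W > 0" and delta2_pos: "delta2 > 0"
    and params_pos: "\<forall>n<N. p n > 0 \<and> h n > 0 \<and> d n > 0 \<and> w n > 0"
    and primal_opt: "feasible N W p h delta2 d bopt tauopt"
        "\<forall>b tau. feasible N W p h delta2 d b tau \<longrightarrow> objective N w tauopt \<le> objective N w tau"
    and dual_opt: "etaopt \<ge> 0" "\<forall>n<N. phiopt n \<ge> 0"
        "\<forall>eta phi. eta \<ge> 0 \<and> (\<forall>n<N. phi n \<ge> 0) \<longrightarrow>
            dual_fun N W p h delta2 d w eta phi \<le> dual_fun N W p h delta2 d w etaopt phiopt"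
  shows "\<forall>n<N.
     tauopt n = sqrt (phiopt n * d n / w n) \<and>
     bopt n = - p n * h n /
       (W * delta2 * (1 + inverse (lambertW (- 1 / exp (etaopt * ln 2 / (phiopt n * W) + 1)))))"
proof (intro allI impI conjI)
  fix n assume n: "n < N"
  interpret optimal_allocation N W p h delta2 d w bopt tauopt
    using W_pos delta2_pos params_pos primal_opt by unfold_locales blast+
  have min: "lagrangian_minimizer etaopt phiopt bopt tauopt"
    by (rule saddle_point[OF _ dual_opt(3)]) (use n in simp)
  have "0 \<le> phiopt n"
    using dual_opt(2) n by simp
  show "tauopt n = sqrt (phiopt n * d n / w n)"
    using min n \<open>0 \<le> phiopt n\<close> by (rule lagrangian_minimizer_offload_time)
  have "0 < phiopt n"
    using min n \<open>0 \<le> phiopt n\<close> by (rule lagrangian_minimizer_rate_multiplier_pos)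
  moreover have "etaopt = phiopt n * marginal_rate n (bopt n)"
    using min n bandwidth_pos[OF n] by (rule lagrangian_minimizer_bandwidth)
  ultimately show "bopt n = - p n * h n /
       (W * delta2 * (1 + inverse (lambertW (- 1 / exp (etaopt * ln 2 / (phiopt n * W) + 1)))))"
    by (rule bandwidth_eq_lambertW[OF n bandwidth_pos[OF n]])
qed

end
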